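(* Let $\mathcal{A}=\{1,\dots,K\}$ be a set of arms, let $a^*\in\mathcal{A}$ be a target arm, and for each $a\in\mathcal{A}$ let $m_a\geq 1$ be an integer and $\vec{y}_a\in\mathbb{R}^{m_a}$ a reward vector. For perturbations $\vec{\epsilon}_a\in\mathbb{R}^{m_a}$ put $\tilde{\mu}_a=(\vec{y}_a+\vec{\epsilon}_a)^T\mathbf{1}/m_a$, where $\mathbf{1}$ is the all-ones vector. Fix a margin $\xi>0$ and consider $$P_1:\quad \min_{\{\vec{\epsilon}_a\}_{a\in\mathcal{A}}}\ \sum_{a\in\mathcal{A}}\|\vec{\epsilon}_a\|_2^2\quad\text{s.t.}\quad \tilde{\mu}_{a^*}\geq \tilde{\mu}_a+\xi\ \ \forall a\neq a^*.$$ Then $P_1$ is a quadratic program with linear constraints and, for every reward instance $\{\vec{y}_a\}_{a\in\mathcal{A}}$, it has at least one optimal solution. Moreover, if the rewards of an $\epsilon$-greedy algorithm's data buffer are replaced by $\vec{y}_a+\vec{\epsilon}_a$ for such a solution, then at round $T+1$ the $\epsilon$-greedy algorithm pulls $a^*$ with probability at least $1-\frac{K-1}{K}\alpha_{T+1}$.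
   Context: Offline attack setting: a stochastic bandit algorithm pulls arms $a_1,\dots,a_T$ and receives rewards $r_t=\mu_{a_t}+\eta_t$ with zero-mean $\sigma$-subGaussian noise; $m_a$ is the number of rounds $t\le T$ with $a_t=a$ and $\vec{y}_a=(r_t:a_t=a)^T$. An attacker replaces each $r_t$ by $r_t+\epsilon_t$ (so arm $a$'s rewards become $\vec{y}_a+\vec{\epsilon}_a$) before the algorithm updates; $\tilde{\mu}_a$ is then the post-attack empirical mean of arm $a$. The $\epsilon$-greedy algorithm with rate function $\alpha_t\in[0,1]$ at round $t$ pulls an arm drawn uniformly from $\mathcal{A}$ with probability $\alpha_t$, and otherwise pulls $\arg\max_a$ of the current empirical means. *)

theory Defs
  imports "HOL-Probability.Probability"
begin

text \<open>Arms are 1..K. Arm a has m a rewards y a 0, ..., y a (m a - 1);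
  perturbation eps a i is added to y a i.\<close>

definition arms :: "nat \<Rightarrow> nat set" where
  "arms K = {1..K}"

definition post_mean :: "(nat \<Rightarrow> nat) \<Rightarrow> (nat \<Rightarrow> nat \<Rightarrow> real) \<Rightarrow> (nat \<Rightarrow> nat \<Rightarrow> real) \<Rightarrow> nat \<Rightarrow> real" where
  "post_mean m y eps a = (\<Sum>i<m a. y a i + eps a i) / real (m a)"

definition attack_cost :: "nat \<Rightarrow> (nat \<Rightarrow> nat) \<Rightarrow> (nat \<Rightarrow> nat \<Rightarrow> real) \<Rightarrow> real" where
  "attack_cost K m eps = (\<Sum>a\<in>arms K. \<Sum>i<m a. (eps a i)^2)"

definition P1_feasible :: "nat \<Rightarrow> (nat \<Rightarrow> nat) \<Rightarrow> (nat \<Rightarrow> nat \<Rightarrow> real) \<Rightarrow> nat \<Rightarrow> real \<Rightarrow> (nat \<Rightarrow> nat \<Rightarrow> real) \<Rightarrow> bool" where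
  "P1_feasible K m y astar xi eps \<longleftrightarrow>
     (\<forall>a\<in>arms K. a \<noteq> astar \<longrightarrow> post_mean m y eps astar \<ge> post_mean m y eps a + xi)"

definition P1_optimal :: "nat \<Rightarrow> (nat \<Rightarrow> nat) \<Rightarrow> (nat \<Rightarrow> nat \<Rightarrow> real) \<Rightarrow> nat \<Rightarrow> real \<Rightarrow> (nat \<Rightarrow> nat \<Rightarrow> real) \<Rightarrow> bool" where
  "P1_optimal K m y astar xi eps \<longleftrightarrow> P1_feasible K m y astar xi eps \<and>
     (\<forall>eps'. P1_feasible K m y astar xi eps' \<longrightarrow> attack_cost K m eps \<le> attack_cost K m eps')"

text \<open>One round of epsilon-greedy with exploration rate alpha: with probability alpha an arm
  uniform on the arm set, otherwise the greedy arm g (an argmax of the current empirical means;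
  the tie-breaking rule is left arbitrary, see the theorem).\<close>

definition eps_greedy_pull :: "nat \<Rightarrow> real \<Rightarrow> nat \<Rightarrow> nat pmf" where
  "eps_greedy_pull K alpha g =
     bernoulli_pmf alpha \<bind> (\<lambda>explore. if explore then pmf_of_set (arms K) else return_pmf g)"

definition is_argmax :: "nat set \<Rightarrow> (nat \<Rightarrow> real) \<Rightarrow> nat \<Rightarrow> bool" where
  "is_argmax A mu g \<longleftrightarrow> g \<in> A \<and> (\<forall>b\<in>A. mu b \<le> mu g)"

end

theory Submission imports Defs begin

text \<open>Only the means of the perturbations matter for feasibility, and by Cauchy-Schwarz the
  cheapest perturbation with prescribed means is constant on each arm. If the target arm's
  mean is raised by t, every other arm a must be lowered by at least
  max 0 (mu_a + xi - mu_astar - t), so the optimal cost is the minimum over t of a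
  continuous function of t that grows at least like t^2; such a minimum exists, and
  constant perturbations attain it. Feasibility leaves the target arm the unique empirical
  maximiser, so the greedy arm is the target, which epsilon-greedy then pulls with
  probability alpha/K + (1 - alpha).\<close>

lemma sum_square_ge_mean_square:
  fixes e :: "nat \<Rightarrow> real"
  assumes "n \<ge> 1"
  shows "real n * ((\<Sum>i<n. e i) / real n)^2 \<le> (\<Sum>i<n. (e i)^2)"
proof -
  define d where "d = (\<Sum>i<n. e i) / real n"
  have sum_e: "(\<Sum>i<n. e i) = real n * d" using assms by (simp add: d_def)
  have "0 \<le> (\<Sum>i<n. (e i - d)^2)" by (simp add: sum_nonneg)
  also have "\<dots> = (\<Sum>i<n. (e i)^2) - 2 * d * (\<Sum>i<n. e i) + real n * d^2"
    by (simp add: power2_diff sum.distrib sum_subtractf sum_distrib_left algebra_simps)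
  finally show ?thesis
    using sum_e unfolding d_def[symmetric] by (simp add: power2_eq_square algebra_simps)
qed

lemma continuous_coercive_attains_min:
  fixes f :: "real \<Rightarrow> real"
  assumes cont: "continuous_on UNIV f" and coercive: "\<And>t. t^2 \<le> f t"
  obtains t0 where "\<And>t. f t0 \<le> f t"
proof -
  define R where "R = f 0 + 1"
  have f0: "0 \<le> f 0" using coercive[of 0] by simp
  have "\<exists>t0\<in>{-R..R}. \<forall>t\<in>{-R..R}. f t0 \<le> f t"
    using f0 continuous_on_subset[OF cont]
    by (intro continuous_attains_inf) (auto simp: R_def)
  then obtain t0 where t0: "\<And>t. t \<in> {-R..R} \<Longrightarrow> f t0 \<le> f t" by blast
  have "f t0 \<le> f t" for t
  proof (cases "t \<in> {-R..R}")
    case True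
    then show ?thesis using t0 by blast
  next
    case False
    then have "R^2 < \<bar>t\<bar>^2" using f0 R_def by (intro power_strict_mono) auto
    moreover have "R \<le> R^2" using f0 R_def by (simp add: power2_eq_square)
    ultimately have "f 0 < f t" using coercive[of t] R_def by simp
    then show ?thesis using t0[of 0] f0 R_def by auto
  qed
  then show thesis by (rule that)
qed

definition arm_mean :: "(nat \<Rightarrow> nat) \<Rightarrow> (nat \<Rightarrow> nat \<Rightarrow> real) \<Rightarrow> nat \<Rightarrow> real" where
  "arm_mean m f a = (\<Sum>i<m a. f a i) / real (m a)"

lemma post_mean_eq_arm_mean_add:
  "post_mean m y eps a = arm_mean m y a + arm_mean m eps a"
  unfolding post_mean_def arm_mean_def by (simp add: sum.distrib add_divide_distrib)

definition required_drop ::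
    "(nat \<Rightarrow> nat) \<Rightarrow> (nat \<Rightarrow> nat \<Rightarrow> real) \<Rightarrow> nat \<Rightarrow> real \<Rightarrow> nat \<Rightarrow> real \<Rightarrow> real" where
  "required_drop m y astar xi a t = max 0 (arm_mean m y a + xi - arm_mean m y astar - t)"

definition reduced_cost ::
    "nat \<Rightarrow> (nat \<Rightarrow> nat) \<Rightarrow> (nat \<Rightarrow> nat \<Rightarrow> real) \<Rightarrow> nat \<Rightarrow> real \<Rightarrow> real \<Rightarrow> real" where
  "reduced_cost K m y astar xi t = real (m astar) * t^2 +
     (\<Sum>a\<in>arms K - {astar}. real (m a) * (required_drop m y astar xi a t)^2)"

definition constant_attack ::
    "(nat \<Rightarrow> nat) \<Rightarrow> (nat \<Rightarrow> nat \<Rightarrow> real) \<Rightarrow> nat \<Rightarrow> real \<Rightarrow> real \<Rightarrow> nat \<Rightarrow> nat \<Rightarrow> real" where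
  "constant_attack m y astar xi t a i = (if a = astar then t else - required_drop m y astar xi a t)"

lemma continuous_reduced_cost: "continuous_on UNIV (reduced_cost K m y astar xi)"
  unfolding reduced_cost_def required_drop_def by (intro continuous_intros)

lemma reduced_cost_ge_square:
  assumes "m astar \<ge> 1"
  shows "t^2 \<le> reduced_cost K m y astar xi t"
proof -
  have "t^2 \<le> real (m astar) * t^2" using assms by (simp add: mult_le_cancel_right1)
  moreover have "0 \<le> (\<Sum>a\<in>arms K - {astar}. real (m a) * (required_drop m y astar xi a t)^2)"
    by (simp add: sum_nonneg)
  ultimately show ?thesis by (simp add: reduced_cost_def)
qed

lemma reduced_cost_le_attack_cost:
  assumes target: "astar \<in> arms K" and m_pos: "\<forall>a\<in>arms K. m a \<ge> 1"
    and feas: "P1_feasible K m y astar xi eps"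
  shows "reduced_cost K m y astar xi (arm_mean m eps astar) \<le> attack_cost K m eps"
proof -
  let ?t = "arm_mean m eps astar"
  have "(\<Sum>a\<in>arms K. real (m a) * (arm_mean m eps a)^2) \<le> attack_cost K m eps"
    unfolding attack_cost_def arm_mean_def
    by (rule sum_mono) (use sum_square_ge_mean_square m_pos in auto)
  moreover have "(\<Sum>a\<in>arms K. real (m a) * (arm_mean m eps a)^2)
      = real (m astar) * ?t^2 + (\<Sum>a\<in>arms K - {astar}. real (m a) * (arm_mean m eps a)^2)"
    using sum.remove[OF _ target] by (simp add: arms_def)
  moreover have "(\<Sum>a\<in>arms K - {astar}. real (m a) * (required_drop m y astar xi a ?t)^2)
      \<le> (\<Sum>a\<in>arms K - {astar}. real (m a) * (arm_mean m eps a)^2)"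
  proof (rule sum_mono)
    fix a assume a: "a \<in> arms K - {astar}"
    then have "post_mean m y eps astar \<ge> post_mean m y eps a + xi"
      using feas unfolding P1_feasible_def by auto
    then have "required_drop m y astar xi a ?t \<le> \<bar>arm_mean m eps a\<bar>"
      unfolding required_drop_def post_mean_eq_arm_mean_add by auto
    then have "(required_drop m y astar xi a ?t)^2 \<le> \<bar>arm_mean m eps a\<bar>^2"
      by (rule power_mono) (simp add: required_drop_def)
    then show "real (m a) * (required_drop m y astar xi a ?t)^2 \<le> real (m a) * (arm_mean m eps a)^2"
      by (simp add: mult_left_mono)
  qed
  ultimately show ?thesis unfolding reduced_cost_def by linarith
qed

lemma arm_mean_constant_attack:
  assumes "m a \<ge> 1"
  shows "arm_mean m (constant_attack m y astar xi t) a =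
    (if a = astar then t else - required_drop m y astar xi a t)"
  using assms by (simp add: arm_mean_def constant_attack_def)

lemma constant_attack_feasible:
  assumes target: "astar \<in> arms K" and m_pos: "\<forall>a\<in>arms K. m a \<ge> 1"
  shows "P1_feasible K m y astar xi (constant_attack m y astar xi t)"
  unfolding P1_feasible_def post_mean_eq_arm_mean_add
  using assms arm_mean_constant_attack by (auto simp: required_drop_def)

lemma attack_cost_constant_attack:
  assumes target: "astar \<in> arms K"
  shows "attack_cost K m (constant_attack m y astar xi t) = reduced_cost K m y astar xi t"
proof -
  have "attack_cost K m (constant_attack m y astar xi t)
      = (\<Sum>a\<in>arms K. real (m a) * (constant_attack m y astar xi t a 0)^2)"
    unfolding attack_cost_def constant_attack_def by simp
  also have "\<dots> = real (m astar) * t^2 +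
      (\<Sum>a\<in>arms K - {astar}. real (m a) * (constant_attack m y astar xi t a 0)^2)"
    by (subst sum.remove[OF _ target]) (simp_all add: arms_def constant_attack_def)
  also have "\<dots> = reduced_cost K m y astar xi t"
    unfolding reduced_cost_def constant_attack_def by (intro arg_cong2[where f="(+)"] sum.cong) auto
  finally show ?thesis .
qed

lemma P1_optimal_exists:
  assumes target: "astar \<in> arms K" and m_pos: "\<forall>a\<in>arms K. m a \<ge> 1"
  shows "\<exists>eps. P1_optimal K m y astar xi eps"
proof -
  obtain t0 where t0: "\<And>t. reduced_cost K m y astar xi t0 \<le> reduced_cost K m y astar xi t"
    using continuous_coercive_attains_min[OF continuous_reduced_cost reduced_cost_ge_square]
      target m_pos by blast
  have "P1_optimal K m y astar xi (constant_attack m y astar xi t0)"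
    unfolding P1_optimal_def
    using constant_attack_feasible[OF assms] attack_cost_constant_attack[OF target]
      reduced_cost_le_attack_cost[OF assms] t0 order_trans by metis
  then show ?thesis by blast
qed

lemma is_argmax_feasible_imp_target:
  assumes "P1_feasible K m y astar xi eps" "is_argmax (arms K) (post_mean m y eps) g"
    "astar \<in> arms K" "xi > 0"
  shows "g = astar"
  using assms unfolding P1_feasible_def is_argmax_def by force

lemma pmf_eps_greedy_pull_greedy:
  assumes "0 \<le> alpha" "alpha \<le> 1" "g \<in> arms K"
  shows "pmf (eps_greedy_pull K alpha g) g = 1 - (real K - 1) / real K * alpha"
proof -
  have K: "K \<ge> 1" and arms: "finite (arms K)" "arms K \<noteq> {}" "card (arms K) = K"
    using assms(3) by (auto simp: arms_def)
  have "pmf (eps_greedy_pull K alpha g) g = alpha / real K + (1 - alpha)"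
    unfolding eps_greedy_pull_def using assms arms by (simp add: pmf_bind)
  also have "\<dots> = 1 - (real K - 1) / real K * alpha" using K by (simp add: field_simps)
  finally show ?thesis .
qed

theorem theorem1:
  fixes K :: nat and astar :: nat and m :: "nat \<Rightarrow> nat" and y :: "nat \<Rightarrow> nat \<Rightarrow> real"
    and xi :: real and alpha :: real
  assumes "astar \<in> arms K"
    and "\<forall>a\<in>arms K. m a \<ge> 1"
    and "xi > 0"
    and "0 \<le> alpha" and "alpha \<le> 1"
  shows "(\<exists>eps. P1_optimal K m y astar xi eps) \<and>
         (\<forall>eps g. P1_optimal K m y astar xi eps \<longrightarrow>
            is_argmax (arms K) (post_mean m y eps) g \<longrightarrow>
            pmf (eps_greedy_pull K alpha g) astar \<ge> 1 - (real K - 1) / real K * alpha)"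
proof (intro conjI allI impI)
  show "\<exists>eps. P1_optimal K m y astar xi eps"
    using P1_optimal_exists assms(1,2) .
next
  fix eps g
  assume "P1_optimal K m y astar xi eps" "is_argmax (arms K) (post_mean m y eps) g"
  then have "g = astar"
    using is_argmax_feasible_imp_target assms(1,3) unfolding P1_optimal_def by blast
  then show "pmf (eps_greedy_pull K alpha g) astar \<ge> 1 - (real K - 1) / real K * alpha"
    using pmf_eps_greedy_pull_greedy assms(1,4,5) by simp
qed

end
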